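(* Let $H\in\mathbb{R}^{n\times n}$ and $M\in\mathbb{R}^{m\times m}$ be symmetric positive semidefinite and $A\in\mathbb{R}^{m\times n}$. Let $l\neq k$ be indices and $\mathcal{B}\subseteq\{1,\dots,n\}\setminus\{l,k\}$. Assume that the linear system in the unknowns $(\Delta x_l,\Delta x_k,\Delta x_{\mathcal{B}},\Delta y,\Delta z_l,\Delta z_k)$ \[ \begin{aligned} h_{ll}\Delta x_l+h_{kl}\Delta x_k+h_{\mathcal{B}l}^T\Delta x_{\mathcal{B}}-a_l^T\Delta y-\Delta z_l&=0,\\ h_{kl}\Delta x_l+h_{kk}\Delta x_k+h_{\mathcal{B}k}^T\Delta x_{\mathcal{B}}-a_k^T\Delta y-\Delta z_k&=0,\\ h_{\mathcal{B}l}\Delta x_l+h_{\mathcal{B}k}\Delta x_k+H_{\mathcal{B}\mathcal{B}}\Delta x_{\mathcal{B}}-A_{\mathcal{B}}^T\Delta y&=0,\\ a_l\Delta x_l+a_k\Delta x_k+A_{\mathcal{B}}\Delta x_{\mathcal{B}}+M\Delta y&=0,\\ \Delta x_l+\Delta z_l&=1,\\ \Delta x_k&=0 \end{aligned} \] has a unique solution, and that in it $\Delta z_k\neq 0$. Then the matrices \[ K_l=\begin{pmatrix}h_{ll}&h_{\mathcal{B}l}^T&a_l^T\\ h_{\mathcal{B}l}&H_{\mathcal{B}\mathcal{B}}&A_{\mathcal{B}}^T\\ a_l&A_{\mathcal{B}}&-M\end{pmatrix}\quad\text{and}\quad K_k=\begin{pmatrix}h_{kk}&h_{\mathcal{B}k}^T&a_k^T\\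 h_{\mathcal{B}k}&H_{\mathcal{B}\mathcal{B}}&A_{\mathcal{B}}^T\\ a_k&A_{\mathcal{B}}&-M\end{pmatrix} \] are nonsingular.
   Context: $h_{ij}$ denotes the $(i,j)$ entry of $H$; $h_{\mathcal{B}j}$ the column vector $(h_{ij})_{i\in\mathcal{B}}$; $H_{\mathcal{B}\mathcal{B}}$ the principal submatrix of $H$ with rows and columns in $\mathcal{B}$; $a_j$ the $j$th column of $A$; $A_{\mathcal{B}}$ the matrix of columns of $A$ indexed by $\mathcal{B}$. *)

theory Defs
  imports "Jordan_Normal_Form.Matrix"
begin

definition sym_psd :: "real mat \<Rightarrow> nat \<Rightarrow> bool" where
  "sym_psd H n \<longleftrightarrow> H \<in> carrier_mat n n \<and> transpose_mat H = H \<and>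
     (\<forall>x \<in> carrier_vec n. 0 \<le> x \<bullet> (H *\<^sub>v x))"

text \<open>The KKT-type matrix
  K_j = [[h_jj, h_Bj^T, a_j^T], [h_Bj, H_BB, A_B^T], [a_j, A_B, -M]],
  with the indices of B listed in increasing order (bs = sorted B).
  Row/column r < 1 + card B refers to primal index (j if r = 0, else the (r-1)-th
  element of B); r \<ge> 1 + card B refers to the dual index r - 1 - card B.\<close>
definition kkt_mat :: "real mat \<Rightarrow> real mat \<Rightarrow> real mat \<Rightarrow> nat \<Rightarrow> nat set \<Rightarrow> nat \<Rightarrow> real mat" where
  "kkt_mat H A M j B m =
    (let bs = sorted_list_of_set B; p = length bs;
         xi = (\<lambda>r. if r = 0 then j else bs ! (r - 1));
         yi = (\<lambda>r. r - 1 - p)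
     in mat (1 + p + m) (1 + p + m) (\<lambda>(r, c).
          if r < 1 + p \<and> c < 1 + p then H $$ (xi r, xi c)
          else if r < 1 + p then A $$ (yi c, xi r)
          else if c < 1 + p then A $$ (yi r, xi c)
          else - M $$ (yi r, yi c)))"

definition step_system ::
  "real mat \<Rightarrow> real mat \<Rightarrow> real mat \<Rightarrow> nat \<Rightarrow> nat \<Rightarrow> nat set \<Rightarrow> nat \<Rightarrow>
   real \<times> real \<times> real vec \<times> real vec \<times> real \<times> real \<Rightarrow> bool" where
  "step_system H A M l k B m s =
    (case s of (dxl, dxk, dxB, dy, dzl, dzk) \<Rightarrow>
     (let bs = sorted_list_of_set B; p = length bs in
      dxB \<in> carrier_vec p \<and> dy \<in> carrier_vec m \<and>
      H $$ (l, l) * dxl + H $$ (k, l) * dxk + (\<Sum>i<p. H $$ (bs ! i, l) * dxB $ i)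
        - (\<Sum>q<m. A $$ (q, l) * dy $ q) - dzl = 0 \<and>
      H $$ (k, l) * dxl + H $$ (k, k) * dxk + (\<Sum>i<p. H $$ (bs ! i, k) * dxB $ i)
        - (\<Sum>q<m. A $$ (q, k) * dy $ q) - dzk = 0 \<and>
      (\<forall>i<p. H $$ (bs ! i, l) * dxl + H $$ (bs ! i, k) * dxk
        + (\<Sum>i'<p. H $$ (bs ! i, bs ! i') * dxB $ i')
        - (\<Sum>q<m. A $$ (q, bs ! i) * dy $ q) = 0) \<and>
      (\<forall>q<m. A $$ (q, l) * dxl + A $$ (q, k) * dxk
        + (\<Sum>i<p. A $$ (q, bs ! i) * dxB $ i)
        + (\<Sum>q'<m. M $$ (q, q') * dy $ q') = 0) \<and>
      dxl + dzl = 1 \<and>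
      dxk = 0))"

end

theory Submission
  imports Defs "Jordan_Normal_Form.Determinant"
begin

text \<open>
  Let (u, w, y) be a kernel vector of K_j and let x be the n-vector with u at j, w on B and
  zeros elsewhere. The block equations say that H x + A^T y vanishes on {j} \<union> B and that
  A x = M y; pairing them gives x^T H x + y^T M y = 0, so semidefiniteness yields H x = 0,
  M y = 0, A x = 0 and A^T y = 0 on {j} \<union> B. Such a direction can be added to the unique
  solution of the step system, or rescaled into a solution with \<Delta>z_k = 0, so uniqueness and
  \<Delta>z_k \<noteq> 0 force it to vanish. For K_k the entry u is handled by pairing x with the slack
  H \<Delta>x - A^T \<Delta>y of the solution, which on {k} \<union> B is \<Delta>z_k e_k; this gives \<Delta>z_k u = 0.
\<close>

lemma invertible_mat_of_trivial_kernel: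
  fixes K :: "'a :: field mat"
  assumes K: "K \<in> carrier_mat n n"
    and ker: "\<And>v. v \<in> carrier_vec n \<Longrightarrow> K *\<^sub>v v = 0\<^sub>v n \<Longrightarrow> v = 0\<^sub>v n"
  shows "invertible_mat K"
proof -
  have "det K \<noteq> 0" using det_0_iff_vec_prod_zero_field[OF K] ker by blast
  from det_non_zero_imp_unit[OF K this, of "()"]
  obtain K' where "K' \<in> carrier_mat n n" "K' * K = 1\<^sub>m n" "K * K' = 1\<^sub>m n"
    unfolding Units_def ring_mat_def by auto
  then show ?thesis
    unfolding invertible_mat_def inverts_mat_def using K by auto
qed

lemma vCons_add: "dim_vec v = dim_vec w \<Longrightarrow> vCons (a + b) (v + w) = vCons a v + vCons b w"
  by (intro eq_vecI) (auto simp: vec_index_vCons)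

lemma smult_vCons: "c \<cdot>\<^sub>v vCons a w = vCons (c * a) (c \<cdot>\<^sub>v w)"
  by (intro eq_vecI) (auto simp: vec_index_vCons)

lemma smult_zero_vec [simp]: "(c :: 'a :: mult_zero) \<cdot>\<^sub>v 0\<^sub>v n = 0\<^sub>v n"
  by (intro eq_vecI) auto

lemma mult_mat_vec_zero [simp]:
  "(X :: 'a :: semiring_0 mat) \<in> carrier_mat nr nc \<Longrightarrow> X *\<^sub>v 0\<^sub>v nc = 0\<^sub>v nr"
  by (intro eq_vecI) auto

lemma add_vec_eq_self_imp_zero:
  fixes v w :: "'a :: group_add vec"
  assumes "v \<in> carrier_vec n" and "w \<in> carrier_vec n" and "v + w = v"
  shows "w = 0\<^sub>v n"
proof (rule eq_vecI)
  fix i assume "i < dim_vec (0\<^sub>v n :: 'a vec)"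
  then have "v $ i + w $ i = (v + w) $ i" using assms(1,2) by (simp add: carrier_vecD)
  also have "\<dots> = v $ i" using assms(3) by simp
  finally have "v $ i + w $ i = v $ i + 0" by simp
  then have "w $ i = 0" by (rule add_left_imp_eq)
  then show "w $ i = 0\<^sub>v n $ i" using \<open>i < dim_vec (0\<^sub>v n)\<close> by simp
qed (use assms in simp)

lemma mult_vec_index_sum:
  fixes X :: "'a :: semiring_0 mat"
  assumes "X \<in> carrier_mat q r" and "i < q" and "v \<in> carrier_vec r"
  shows "(X *\<^sub>v v) $ i = (\<Sum>c<r. X $$ (i, c) * v $ c)"
  using assms by (auto simp: scalar_prod_def lessThan_atLeast0 intro!: sum.cong)

lemma vCons_0_append_0:
  "vCons 0 (0\<^sub>v p) @\<^sub>v 0\<^sub>v q = (0\<^sub>v (1 + p + q) :: 'a :: zero vec)"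
  by (auto simp: zero_vec_Suc[symmetric])

lemma nonneg_quadratic_imp_linear_coeff_zero:
  fixes a b :: real
  assumes nonneg: "\<And>t. 0 \<le> 2 * b * t + a * t\<^sup>2"
  shows "b = 0"
proof -
  have "0 \<le> a" using nonneg[of 1] nonneg[of "-1"] by simp
  have "0 \<le> 2 * b * (- b / (a + 1)) + a * (- b / (a + 1))\<^sup>2" by (rule nonneg)
  also have "\<dots> = - b\<^sup>2 * (a + 2) / (a + 1)\<^sup>2"
    using \<open>0 \<le> a\<close> by (simp add: divide_simps power2_eq_square) (simp add: algebra_simps)
  finally have "b\<^sup>2 * (a + 2) \<le> 0"
    using \<open>0 \<le> a\<close> by (simp add: divide_le_0_iff)
  then show "b = 0" using \<open>0 \<le> a\<close> by (simp add: mult_le_0_iff)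
qed

lemma scalar_prod_self_eq_0_iff:
  fixes z :: "real vec"
  shows "z \<bullet> z = 0 \<longleftrightarrow> z = 0\<^sub>v (dim_vec z)"
proof
  assume "z \<bullet> z = 0"
  then have "\<forall>i\<in>{0..<dim_vec z}. z $ i * z $ i = 0"
    unfolding scalar_prod_def by (subst (asm) sum_nonneg_eq_0_iff) auto
  then show "z = 0\<^sub>v (dim_vec z)" by (intro eq_vecI) auto
next
  assume "z = 0\<^sub>v (dim_vec z)"
  then show "z \<bullet> z = 0" by (metis carrier_vec_dim_vec scalar_prod_left_zero)
qed

lemma sym_psd_carrier: "sym_psd H n \<Longrightarrow> H \<in> carrier_mat n n"
  unfolding sym_psd_def by simp

lemma sym_psd_nonneg: "sym_psd H n \<Longrightarrow> x \<in> carrier_vec n \<Longrightarrow> 0 \<le> x \<bullet> (H *\<^sub>v x)"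
  unfolding sym_psd_def by simp

lemma sym_psd_entry_sym: "sym_psd H n \<Longrightarrow> i < n \<Longrightarrow> j < n \<Longrightarrow> H $$ (i, j) = H $$ (j, i)"
  unfolding sym_psd_def by (metis carrier_matD index_transpose_mat(1))

lemma sym_psd_scalar_prod_swap:
  assumes "sym_psd H n" and "x \<in> carrier_vec n" and "z \<in> carrier_vec n"
  shows "x \<bullet> (H *\<^sub>v z) = (H *\<^sub>v x) \<bullet> z"
  using transpose_vec_mult_scalar[of H n n z x] assms unfolding sym_psd_def by simp

lemma sym_psd_kernel:
  assumes H: "sym_psd H n" and x: "x \<in> carrier_vec n" and q: "x \<bullet> (H *\<^sub>v x) = 0"
  shows "H *\<^sub>v x = 0\<^sub>v n"
proof -
  have Hc: "H \<in> carrier_mat n n" using H by (rule sym_psd_carrier)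
  define z where "z = H *\<^sub>v x"
  have z: "z \<in> carrier_vec n" unfolding z_def using Hc x by simp
  have Hz: "H *\<^sub>v z \<in> carrier_vec n" using Hc z by simp
  have "0 \<le> 2 * (z \<bullet> z) * t + (z \<bullet> (H *\<^sub>v z)) * t\<^sup>2" for t
  proof -
    have "0 \<le> (x + t \<cdot>\<^sub>v z) \<bullet> (H *\<^sub>v (x + t \<cdot>\<^sub>v z))"
      using x z by (intro sym_psd_nonneg[OF H]) simp
    also have "\<dots> = x \<bullet> (H *\<^sub>v x) + t * (x \<bullet> (H *\<^sub>v z)) + t * (z \<bullet> (H *\<^sub>v x))
        + t\<^sup>2 * (z \<bullet> (H *\<^sub>v z))"
      using x z Hc Hz
      by (simp add: mult_add_distrib_mat_vec[OF Hc] mult_mat_vec[OF Hc]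
          add_scalar_prod_distrib[of _ n] scalar_prod_add_distrib[of _ n]
          power2_eq_square algebra_simps)
    also have "x \<bullet> (H *\<^sub>v z) = z \<bullet> z"
      using sym_psd_scalar_prod_swap[OF H x z] unfolding z_def .
    finally show ?thesis using q unfolding z_def by (simp add: algebra_simps)
  qed
  then have "z \<bullet> z = 0" by (rule nonneg_quadratic_imp_linear_coeff_zero)
  then show ?thesis using z Hc unfolding z_def scalar_prod_self_eq_0_iff by simp
qed

lemma four_block_mat_mult_vec_eq_0:
  fixes A1 :: "'a :: semiring_0 mat"
  assumes "A1 \<in> carrier_mat p p" and "B1 \<in> carrier_mat p q"
    and "C1 \<in> carrier_mat q p" and "D1 \<in> carrier_mat q q"
    and v: "v \<in> carrier_vec (p + q)"
    and "four_block_mat A1 B1 C1 D1 *\<^sub>v v = 0\<^sub>v (p + q)"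
  shows "A1 *\<^sub>v vec_first v p + B1 *\<^sub>v vec_last v q = 0\<^sub>v p"
    and "C1 *\<^sub>v vec_first v p + D1 *\<^sub>v vec_last v q = 0\<^sub>v q"
proof -
  have "0\<^sub>v p @\<^sub>v 0\<^sub>v q = (0\<^sub>v (p + q) :: 'a vec)" by auto
  then have "(A1 *\<^sub>v vec_first v p + B1 *\<^sub>v vec_last v q) @\<^sub>v (C1 *\<^sub>v vec_first v p + D1 *\<^sub>v vec_last v q)
      = 0\<^sub>v p @\<^sub>v 0\<^sub>v q"
    using four_block_mat_mult_vec[OF assms(1-4) vec_first_carrier[of v p] vec_last_carrier[of v q]]
      assms(6) v
    by simp
  moreover have "A1 *\<^sub>v vec_first v p + B1 *\<^sub>v vec_last v q \<in> carrier_vec p"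
    using assms(1,2) by auto
  ultimately show "A1 *\<^sub>v vec_first v p + B1 *\<^sub>v vec_last v q = 0\<^sub>v p"
    and "C1 *\<^sub>v vec_first v p + D1 *\<^sub>v vec_last v q = 0\<^sub>v q"
    using append_vec_eq[OF _ zero_carrier_vec] by blast+
qed

lemma psd_saddle_kernel:
  fixes H M A :: "real mat"
  assumes H: "sym_psd H n" and M: "sym_psd M m" and A: "A \<in> carrier_mat m n"
    and x: "x \<in> carrier_vec n" and y: "y \<in> carrier_vec m"
    and Ax: "A *\<^sub>v x = M *\<^sub>v y" and orth: "x \<bullet> (H *\<^sub>v x + transpose_mat A *\<^sub>v y) = 0"
  shows "H *\<^sub>v x = 0\<^sub>v n" and "M *\<^sub>v y = 0\<^sub>v m"
proof -
  have Hx: "H *\<^sub>v x \<in> carrier_vec n" and ATy: "transpose_mat A *\<^sub>v y \<in> carrier_vec n"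
    using sym_psd_carrier[OF H] A x y by auto
  have "0 = x \<bullet> (H *\<^sub>v x) + (transpose_mat A *\<^sub>v y) \<bullet> x"
    using orth scalar_prod_add_distrib[OF x Hx ATy] comm_scalar_prod[OF x ATy] by simp
  also have "\<dots> = x \<bullet> (H *\<^sub>v x) + y \<bullet> (M *\<^sub>v y)"
    using transpose_vec_mult_scalar[OF A x y] Ax by simp
  finally have sum0: "x \<bullet> (H *\<^sub>v x) + y \<bullet> (M *\<^sub>v y) = 0" by simp
  have "0 \<le> x \<bullet> (H *\<^sub>v x)" and "0 \<le> y \<bullet> (M *\<^sub>v y)"
    using sym_psd_nonneg[OF H x] sym_psd_nonneg[OF M y] .
  then have "x \<bullet> (H *\<^sub>v x) = 0" and "y \<bullet> (M *\<^sub>v y) = 0" using sum0 by linarith+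
  then show "H *\<^sub>v x = 0\<^sub>v n" and "M *\<^sub>v y = 0\<^sub>v m"
    using sym_psd_kernel[OF H x] sym_psd_kernel[OF M y] by auto
qed

definition selection_mat :: "nat \<Rightarrow> nat list \<Rightarrow> 'a :: zero_neq_one mat" where
  "selection_mat n js = mat n (length js) (\<lambda>(i, r). if js ! r = i then 1 else 0)"

lemma selection_mat_carrier [simp]: "selection_mat n js \<in> carrier_mat n (length js)"
  and dim_selection_mat [simp]: "dim_row (selection_mat n js) = n" "dim_col (selection_mat n js) = length js"
  unfolding selection_mat_def by simp_all

lemma col_selection_mat [simp]:
  "r < length js \<Longrightarrow> col (selection_mat n js) r = unit_vec n (js ! r)"
  unfolding selection_mat_def unit_vec_def by auto

lemma transpose_selection_mat_mult:
  fixes X :: "'a :: semiring_1 mat"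
  assumes js: "set js \<subseteq> {..<n}" and X: "X \<in> carrier_mat n q"
  shows "transpose_mat (selection_mat n js) * X = mat (length js) q (\<lambda>(r, c). X $$ (js ! r, c))"
    (is "?L = ?R")
proof (rule eq_matI)
  fix r c assume r: "r < dim_row ?R" and c: "c < dim_col ?R"
  have "js ! r < n" using js r nth_mem by fastforce
  then show "?L $$ (r, c) = ?R $$ (r, c)"
    using r c X by (simp add: scalar_prod_left_unit[of "col X c" n])
qed (use X in auto)

lemma mult_selection_mat:
  fixes X :: "'a :: semiring_1 mat"
  assumes js: "set js \<subseteq> {..<n}" and X: "X \<in> carrier_mat q n"
  shows "X * selection_mat n js = mat q (length js) (\<lambda>(i, c). X $$ (i, js ! c))"
    (is "?L = ?R")
proof (rule eq_matI)
  fix i c assume i: "i < dim_row ?R" and c: "c < dim_col ?R"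
  have "js ! c < n" using js c nth_mem by fastforce
  then show "?L $$ (i, c) = ?R $$ (i, c)"
    using i c X by (simp add: scalar_prod_right_unit[of _ n "row X i"])
qed (use X in auto)

lemma transpose_selection_mat_mult_vec:
  fixes f :: "'a :: semiring_1 vec"
  assumes js: "set js \<subseteq> {..<n}" and f: "f \<in> carrier_vec n"
  shows "transpose_mat (selection_mat n js) *\<^sub>v f = vec (length js) (\<lambda>r. f $ (js ! r))"
    (is "?L = ?R")
proof (rule eq_vecI)
  fix r assume r: "r < dim_vec ?R"
  have "js ! r < n" using js r nth_mem by fastforce
  then show "?L $ r = ?R $ r" using r f by (simp add: scalar_prod_left_unit[of _ n])
qed simp

lemma scalar_prod_selection_mat_mult_vec:
  fixes f :: "'a :: comm_semiring_1 vec"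
  assumes js: "set js \<subseteq> {..<n}" and f: "f \<in> carrier_vec n" and v: "v \<in> carrier_vec (length js)"
  shows "f \<bullet> (selection_mat n js *\<^sub>v v) = (\<Sum>r<length js. f $ (js ! r) * v $ r)"
proof -
  have "f \<bullet> (selection_mat n js *\<^sub>v v) = (transpose_mat (selection_mat n js) *\<^sub>v f) \<bullet> v"
    using transpose_vec_mult_scalar[OF selection_mat_carrier v f] by simp
  also have "\<dots> = (\<Sum>r<length js. f $ (js ! r) * v $ r)"
    using v unfolding transpose_selection_mat_mult_vec[OF js f] scalar_prod_def
    by (simp add: lessThan_atLeast0)
  finally show ?thesis .
qed

lemma selection_mat_mult_vec_index:
  fixes v :: "'a :: semiring_1 vec"
  assumes i: "i < n" and v: "v \<in> carrier_vec (length js)"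
  shows "(selection_mat n js *\<^sub>v v) $ i = (\<Sum>r<length js. if js ! r = i then v $ r else 0)"
  using i v by (auto simp: selection_mat_def scalar_prod_def lessThan_atLeast0 intro!: sum.cong)

lemma selection_mat_mult_vCons_0:
  fixes w :: "'a :: semiring_1 vec"
  assumes w: "w \<in> carrier_vec (length js)"
  shows "selection_mat n (j # js) *\<^sub>v vCons 0 w = selection_mat n js *\<^sub>v w" (is "?L = ?R")
proof (rule eq_vecI)
  fix i assume "i < dim_vec ?R"
  then have i: "i < n" by simp
  have "?L $ i = (\<Sum>r<Suc (length js). if (j # js) ! r = i then vCons 0 w $ r else 0)"
    using selection_mat_mult_vec_index[OF i, of "vCons 0 w" "j # js"] w by simp
  also have "\<dots> = (\<Sum>r<length js. if js ! r = i then w $ r else 0)"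
    by (subst sum.lessThan_Suc_shift) (simp cong: if_cong)
  also have "\<dots> = ?R $ i" using selection_mat_mult_vec_index[OF i w] by simp
  finally show "?L $ i = ?R $ i" .
qed (simp add: selection_mat_def)

lemma kkt_four_block_kernel:
  fixes H M A P :: "real mat"
  assumes H: "sym_psd H n" and M: "sym_psd M m"
    and A: "A \<in> carrier_mat m n" and P: "P \<in> carrier_mat n p"
    and v: "v \<in> carrier_vec (p + m)"
    and Kv: "four_block_mat (transpose_mat P * H * P) (transpose_mat P * transpose_mat A)
               (A * P) (- M) *\<^sub>v v = 0\<^sub>v (p + m)"
  defines "x \<equiv> P *\<^sub>v vec_first v p" and "y \<equiv> vec_last v m"
  shows "H *\<^sub>v x = 0\<^sub>v n" and "A *\<^sub>v x = 0\<^sub>v m" and "M *\<^sub>v y = 0\<^sub>v m"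
    and "transpose_mat P *\<^sub>v (transpose_mat A *\<^sub>v y) = 0\<^sub>v p"
proof -
  have Hc: "H \<in> carrier_mat n n" and Mc: "M \<in> carrier_mat m m"
    using H M by (auto intro: sym_psd_carrier)
  have Pt: "transpose_mat P \<in> carrier_mat p n" using P by simp
  define w where "w = vec_first v p"
  have w: "w \<in> carrier_vec p" and y: "y \<in> carrier_vec m" and x: "x \<in> carrier_vec n"
    unfolding w_def y_def x_def using P by auto
  have top: "transpose_mat P * H * P *\<^sub>v w + transpose_mat P * transpose_mat A *\<^sub>v y = 0\<^sub>v p"
    and bottom: "A * P *\<^sub>v w + - M *\<^sub>v y = 0\<^sub>v m"
    using four_block_mat_mult_vec_eq_0[OF _ _ _ _ v Kv] Hc Mc A P unfolding w_def y_def by auto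
  define g where "g = H *\<^sub>v x + transpose_mat A *\<^sub>v y"
  have g: "g \<in> carrier_vec n" unfolding g_def using Hc A x y by simp
  have "transpose_mat P * H * P *\<^sub>v w = transpose_mat P *\<^sub>v (H *\<^sub>v x)"
    using assoc_mult_mat_vec[OF mult_carrier_mat[OF Pt Hc] P w] assoc_mult_mat_vec[OF Pt Hc]
      P w unfolding x_def w_def by simp
  moreover have "transpose_mat P * transpose_mat A *\<^sub>v y = transpose_mat P *\<^sub>v (transpose_mat A *\<^sub>v y)"
    using assoc_mult_mat_vec[OF Pt _ y] A by simp
  ultimately have Pg: "transpose_mat P *\<^sub>v g = 0\<^sub>v p"
    using top Hc A x y unfolding g_def by (simp add: mult_add_distrib_mat_vec[OF Pt])
  have "A *\<^sub>v x + - (M *\<^sub>v y) = 0\<^sub>v m"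
    using bottom assoc_mult_mat_vec[OF A P w] Mc y unfolding x_def w_def by simp
  then have Ax: "A *\<^sub>v x = M *\<^sub>v y"
  proof (intro eq_vecI)
    fix i assume "i < dim_vec (M *\<^sub>v y)"
    then show "(A *\<^sub>v x) $ i = (M *\<^sub>v y) $ i"
      using arg_cong[OF \<open>A *\<^sub>v x + - (M *\<^sub>v y) = 0\<^sub>v m\<close>, of "\<lambda>u. u $ i"] A Mc by simp
  qed (use A Mc in simp)
  have "0 = (transpose_mat P *\<^sub>v g) \<bullet> w" using Pg w by simp
  also have "\<dots> = g \<bullet> x" unfolding x_def w_def[symmetric] using transpose_vec_mult_scalar[OF P w g] .
  also have "\<dots> = x \<bullet> g" using comm_scalar_prod[OF g x] .
  finally have "x \<bullet> (H *\<^sub>v x + transpose_mat A *\<^sub>v y) = 0" unfolding g_def by simp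
  then show Hx: "H *\<^sub>v x = 0\<^sub>v n" and My: "M *\<^sub>v y = 0\<^sub>v m"
    using psd_saddle_kernel[OF H M A x y Ax] by blast+
  show "A *\<^sub>v x = 0\<^sub>v m" using Ax My by simp
  show "transpose_mat P *\<^sub>v (transpose_mat A *\<^sub>v y) = 0\<^sub>v p"
    using Pg A y unfolding g_def Hx by simp
qed

lemma kkt_mat_eq_four_block_mat:
  fixes H A M :: "real mat"
  assumes H: "H \<in> carrier_mat n n" and A: "A \<in> carrier_mat m n" and M: "M \<in> carrier_mat m m"
    and j: "j < n" and B: "B \<subseteq> {..<n}"
  defines "P \<equiv> selection_mat n (j # sorted_list_of_set B)"
  shows "kkt_mat H A M j B m = four_block_mat (transpose_mat P * H * P)
           (transpose_mat P * transpose_mat A) (A * P) (- M)"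
proof -
  define js where "js = j # sorted_list_of_set B"
  have "finite B" using B finite_subset by blast
  then have len: "length js = 1 + card B" and js: "set js \<subseteq> {..<n}"
    unfolding js_def using j B by auto
  have js_lt: "js ! r < n" if "r < length js" for r using js that nth_mem by fastforce
  have HP: "transpose_mat P * H * P = mat (length js) (length js) (\<lambda>(r, c). H $$ (js ! r, js ! c))"
    unfolding P_def js_def[symmetric] transpose_selection_mat_mult[OF js H]
    by (subst mult_selection_mat[OF js]) (auto intro!: eq_matI simp: js_lt)
  have AP: "transpose_mat P * transpose_mat A = mat (length js) m (\<lambda>(r, c). A $$ (c, js ! r))"
    unfolding P_def js_def[symmetric] using A
    by (subst transpose_selection_mat_mult[OF js]) (auto intro!: eq_matI simp: js_lt)
  have PA: "A * P = mat m (length js) (\<lambda>(q, c). A $$ (q, js ! c))"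
    unfolding P_def js_def[symmetric] using mult_selection_mat[OF js A] .
  show ?thesis
    unfolding HP AP PA kkt_mat_def four_block_mat_def Let_def
    using M len unfolding js_def
    by (intro eq_matI) (auto simp: nth_Cons' algebra_simps)
qed

locale kkt_pivot =
  fixes H M A :: "real mat" and n m l k :: nat and B :: "nat set"
  assumes H: "sym_psd H n" and M: "sym_psd M m" and A: "A \<in> carrier_mat m n"
    and l: "l < n" and k: "k < n" and B: "B \<subseteq> {0..<n} - {l, k}"
    and unique_step: "\<exists>!s. step_system H A M l k B m s"
    and step_dzk_nonzero: "\<And>dxl dxk dxB dy dzl dzk.
           step_system H A M l k B m (dxl, dxk, dxB, dy, dzl, dzk) \<Longrightarrow> dzk \<noteq> 0"
begin

abbreviation bs :: "nat list" where "bs \<equiv> sorted_list_of_set B"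

text \<open>\<open>primal j u w\<close> is the paper's (\<Delta>x_j, \<Delta>x_B) padded with zeros to an n-vector.\<close>

definition primal :: "nat \<Rightarrow> real \<Rightarrow> real vec \<Rightarrow> real vec" where
  "primal j u w = selection_mat n (j # bs) *\<^sub>v vCons u w"

text \<open>The paper's \<Delta>z: its entries at l and k are \<Delta>z_l and \<Delta>z_k, and it vanishes on B
  (\<open>step_system_iff\<close>).\<close>

definition slack :: "real vec \<Rightarrow> real vec \<Rightarrow> real vec" where
  "slack x dy = H *\<^sub>v x - transpose_mat A *\<^sub>v dy"

lemma H_carrier: "H \<in> carrier_mat n n" and M_carrier: "M \<in> carrier_mat m m"
  using H M by (auto intro: sym_psd_carrier)

lemma set_bs: "set bs = B" and length_bs: "length bs = card B" and B_lt: "B \<subseteq> {..<n}"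
proof -
  have "finite B" using B finite_subset by blast
  then show "set bs = B" "length bs = card B" by auto
  show "B \<subseteq> {..<n}" using B by auto
qed

lemma indices_lt: "j < n \<Longrightarrow> set (j # bs) \<subseteq> {..<n}"
  using set_bs B_lt by auto

lemma ball_B_iff: "(\<forall>i\<in>B. P i) \<longleftrightarrow> (\<forall>c<card B. P (bs ! c))"
  using set_bs length_bs in_set_conv_nth[of _ bs] by auto

lemma primal_carrier [simp]: "primal j u w \<in> carrier_vec n"
  unfolding primal_def by (intro carrier_vecI) simp

lemma scalar_prod_primal:
  assumes j: "j < n" and f: "f \<in> carrier_vec n" and w: "w \<in> carrier_vec (card B)"
  shows "f \<bullet> primal j u w = f $ j * u + (\<Sum>c<card B. f $ (bs ! c) * w $ c)"
  unfolding primal_def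
  using scalar_prod_selection_mat_mult_vec[OF indices_lt[OF j] f, of "vCons u w"] w length_bs
  by (simp add: sum.lessThan_Suc_shift del: sum.lessThan_Suc)

lemma primal_add:
  "w1 \<in> carrier_vec (card B) \<Longrightarrow> w2 \<in> carrier_vec (card B) \<Longrightarrow>
    primal j (a + b) (w1 + w2) = primal j a w1 + primal j b w2"
  unfolding primal_def using length_bs
  by (simp add: vCons_add mult_add_distrib_mat_vec[OF selection_mat_carrier])

lemma primal_smult:
  "w \<in> carrier_vec (card B) \<Longrightarrow> primal j (c * a) (c \<cdot>\<^sub>v w) = c \<cdot>\<^sub>v primal j a w"
  unfolding primal_def using length_bs
  by (simp add: smult_vCons[symmetric] mult_mat_vec[OF selection_mat_carrier])

lemma primal_zero_head: "w \<in> carrier_vec (card B) \<Longrightarrow> primal j 0 w = selection_mat n bs *\<^sub>v w"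
  unfolding primal_def using length_bs by (simp add: selection_mat_mult_vCons_0)

lemma primal_zero: "primal j 0 (0\<^sub>v (card B)) = 0\<^sub>v n"
proof (rule eq_vecI)
  fix i assume "i < dim_vec (0\<^sub>v n :: real vec)"
  then show "primal j 0 (0\<^sub>v (card B)) $ i = 0\<^sub>v n $ i"
    unfolding primal_def using length_bs
    by (simp add: zero_vec_Suc[symmetric] scalar_prod_right_zero[OF carrier_vecI])
qed (simp add: primal_def)

lemma bs_lt: "c < card B \<Longrightarrow> bs ! c < n"
  using set_bs length_bs B_lt nth_mem by fastforce

lemma mult_primal_index:
  assumes X: "X \<in> carrier_mat q n" and i: "i < q" and j: "j < n"
    and w: "w \<in> carrier_vec (card B)"
  shows "(X *\<^sub>v primal j u w) $ i = X $$ (i, j) * u + (\<Sum>c<card B. X $$ (i, bs ! c) * w $ c)"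
proof -
  have "(X *\<^sub>v primal j u w) $ i = row X i \<bullet> primal j u w" using X i by simp
  also have "\<dots> = row X i $ j * u + (\<Sum>c<card B. row X i $ (bs ! c) * w $ c)"
    using X i by (intro scalar_prod_primal[OF j _ w]) simp
  also have "\<dots> = X $$ (i, j) * u + (\<Sum>c<card B. X $$ (i, bs ! c) * w $ c)"
    using X i j bs_lt by (auto intro!: sum.cong)
  finally show ?thesis .
qed

lemma step_system_iff:
  "step_system H A M l k B m (dxl, dxk, dxB, dy, dzl, dzk) \<longleftrightarrow>
     dxB \<in> carrier_vec (card B) \<and> dy \<in> carrier_vec m \<and> dxk = 0 \<and> dxl + dzl = 1 \<and>
     slack (primal l dxl dxB) dy $ l = dzl \<and> slack (primal l dxl dxB) dy $ k = dzk \<and>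
     (\<forall>i\<in>B. slack (primal l dxl dxB) dy $ i = 0) \<and>
     A *\<^sub>v primal l dxl dxB + M *\<^sub>v dy = 0\<^sub>v m"
proof (cases "dxB \<in> carrier_vec (card B) \<and> dy \<in> carrier_vec m \<and> dxk = 0")
  case False
  then show ?thesis unfolding step_system_def Let_def length_bs by auto
next
  case True
  then have dxB: "dxB \<in> carrier_vec (card B)" and dy: "dy \<in> carrier_vec m" and "dxk = 0"
    by auto
  define x where "x = primal l dxl dxB"
  have At: "transpose_mat A \<in> carrier_mat n m" using A by simp
  have slack_index: "slack x dy $ i = H $$ (i, l) * dxl + (\<Sum>c<card B. H $$ (i, bs ! c) * dxB $ c)
      - (\<Sum>q<m. A $$ (q, i) * dy $ q)" if "i < n" for i
    unfolding slack_def x_def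
    using that H_carrier A dy mult_primal_index[OF H_carrier that l dxB]
      mult_vec_index_sum[OF At that dy]
    by simp
  have H_sym_sum: "(\<Sum>c<card B. H $$ (j, bs ! c) * dxB $ c) = (\<Sum>c<card B. H $$ (bs ! c, j) * dxB $ c)"
    if "j < n" for j
    using sym_psd_entry_sym[OF H that] bs_lt by (auto intro!: sum.cong)
  have primal_eq: "A *\<^sub>v x + M *\<^sub>v dy = 0\<^sub>v m \<longleftrightarrow> (\<forall>q<m. A $$ (q, l) * dxl
      + (\<Sum>c<card B. A $$ (q, bs ! c) * dxB $ c) + (\<Sum>q'<m. M $$ (q, q') * dy $ q') = 0)"
    unfolding vec_eq_iff x_def
    using A M_carrier dy mult_primal_index[OF A _ l dxB] mult_vec_index_sum[OF M_carrier _ dy]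
    by auto
  show ?thesis
    unfolding step_system_def Let_def length_bs x_def[symmetric] primal_eq ball_B_iff
    using True slack_index[OF l] slack_index[OF k] slack_index[OF bs_lt] H_sym_sum[OF l]
      H_sym_sum[OF k]
    by auto
qed

lemma step_solution_eq:
  "step_system H A M l k B m s \<Longrightarrow> step_system H A M l k B m s' \<Longrightarrow> s = s'"
  using unique_step by blast

lemma obtain_step_solution:
  obtains dxl dxB dy dzl dzk where "step_system H A M l k B m (dxl, 0, dxB, dy, dzl, dzk)"
proof -
  obtain s where "step_system H A M l k B m s" using unique_step by blast
  moreover obtain dxl dxk dxB dy dzl dzk where "s = (dxl, dxk, dxB, dy, dzl, dzk)"
    by (rule prod_cases6)
  ultimately have s: "step_system H A M l k B m (dxl, dxk, dxB, dy, dzl, dzk)" by simp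
  then have "dxk = 0" unfolding step_system_iff by blast
  then show thesis using s that by blast
qed

lemma null_dual_direction_eq_0:
  assumes y: "y \<in> carrier_vec m" and My: "M *\<^sub>v y = 0\<^sub>v m"
    and Ay_l: "(transpose_mat A *\<^sub>v y) $ l = 0" and Ay_B: "\<forall>i\<in>B. (transpose_mat A *\<^sub>v y) $ i = 0"
  shows "y = 0\<^sub>v m"
proof -
  obtain dxl dxB dy dzl dzk where s: "step_system H A M l k B m (dxl, 0, dxB, dy, dzl, dzk)"
    by (rule obtain_step_solution)
  then have dy: "dy \<in> carrier_vec m" by (simp add: step_system_iff)
  define x where "x = primal l dxl dxB"
  have At: "transpose_mat A \<in> carrier_mat n m" using A by simp
  have slack_shift: "slack x (dy + y) $ i = slack x dy $ i - (transpose_mat A *\<^sub>v y) $ i"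
    if "i < n" for i
    using that A H_carrier dy y unfolding slack_def x_def
    by (simp add: mult_add_distrib_mat_vec[OF At dy y])
  have "M *\<^sub>v (dy + y) = M *\<^sub>v dy"
    using M_carrier dy y My by (simp add: mult_add_distrib_mat_vec[OF M_carrier dy y])
  then have "step_system H A M l k B m
      (dxl, 0, dxB, dy + y, dzl, dzk - (transpose_mat A *\<^sub>v y) $ k)"
    using s dy y Ay_l Ay_B B_lt l k slack_shift unfolding step_system_iff x_def[symmetric]
    by auto
  from step_solution_eq[OF this s] have "dy + y = dy" by simp
  then show ?thesis using add_vec_eq_self_imp_zero[OF dy y] by simp
qed

lemma null_primal_direction_eq_0:
  assumes w: "w \<in> carrier_vec (card B)"
    and Hw: "H *\<^sub>v (selection_mat n bs *\<^sub>v w) = 0\<^sub>v n"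
    and Aw: "A *\<^sub>v (selection_mat n bs *\<^sub>v w) = 0\<^sub>v m"
  shows "w = 0\<^sub>v (card B)"
proof -
  obtain dxl dxB dy dzl dzk where s: "step_system H A M l k B m (dxl, 0, dxB, dy, dzl, dzk)"
    by (rule obtain_step_solution)
  then have dxB: "dxB \<in> carrier_vec (card B)" and dy: "dy \<in> carrier_vec m"
    by (simp_all add: step_system_iff)
  define x where "x = primal l dxl dxB"
  define z where "z = selection_mat n bs *\<^sub>v w"
  have z: "z \<in> carrier_vec n" unfolding z_def by (intro carrier_vecI) simp
  have shift: "primal l dxl (dxB + w) = x + z"
    using primal_add[OF dxB w, of l dxl 0] primal_zero_head[OF w] unfolding x_def z_def by simp
  have "H *\<^sub>v (x + z) = H *\<^sub>v x" and "A *\<^sub>v (x + z) = A *\<^sub>v x"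
    using Hw Aw H_carrier A z unfolding z_def[symmetric] x_def
    by (simp_all add: mult_add_distrib_mat_vec[of _ _ n])
  then have "step_system H A M l k B m (dxl, 0, dxB + w, dy, dzl, dzk)"
    using s dxB w unfolding step_system_iff shift x_def[symmetric] slack_def by simp
  from step_solution_eq[OF this s] have "dxB + w = dxB" by simp
  then show ?thesis using add_vec_eq_self_imp_zero[OF dxB w] by simp
qed

lemma null_primal_direction_head_l:
  assumes w: "w \<in> carrier_vec (card B)"
    and Hx: "H *\<^sub>v primal l u w = 0\<^sub>v n" and Ax: "A *\<^sub>v primal l u w = 0\<^sub>v m"
  shows "u = 0"
proof (rule ccontr)
  assume u: "u \<noteq> 0"
  define x where "x = primal l 1 ((1 / u) \<cdot>\<^sub>v w)"
  have x: "x = (1 / u) \<cdot>\<^sub>v primal l u w"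
    using primal_smult[OF w, of l "1 / u" u] u unfolding x_def by simp
  have "H *\<^sub>v x = 0\<^sub>v n" and "A *\<^sub>v x = 0\<^sub>v m"
    unfolding x using Hx Ax H_carrier A by (simp_all add: mult_mat_vec[of _ _ n])
  then have "slack x (0\<^sub>v m) = 0\<^sub>v n"
    unfolding slack_def using A by (intro eq_vecI) auto
  then have "step_system H A M l k B m (1, 0, (1 / u) \<cdot>\<^sub>v w, 0\<^sub>v m, 0, 0)"
    unfolding step_system_iff x_def[symmetric]
    using w l k B_lt \<open>A *\<^sub>v x = 0\<^sub>v m\<close> M_carrier by auto
  then show False using step_dzk_nonzero by blast
qed

lemma null_dual_direction_at_l:
  assumes y: "y \<in> carrier_vec m" and My: "M *\<^sub>v y = 0\<^sub>v m"
    and Ay_k: "(transpose_mat A *\<^sub>v y) $ k = 0" and Ay_B: "\<forall>i\<in>B. (transpose_mat A *\<^sub>v y) $ i = 0"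
  shows "(transpose_mat A *\<^sub>v y) $ l = 0"
proof (rule ccontr)
  define c where "c = (transpose_mat A *\<^sub>v y) $ l"
  assume "c \<noteq> 0"
  define dy where "dy = (- 1 / c) \<cdot>\<^sub>v y"
  have slack_index: "slack (primal l 0 (0\<^sub>v (card B))) dy $ i = (transpose_mat A *\<^sub>v y) $ i / c"
    if "i < n" for i
    using that A H_carrier y unfolding slack_def primal_zero dy_def by simp
  have "slack (primal l 0 (0\<^sub>v (card B))) dy $ i = 0" if "i \<in> B" for i
    using that Ay_B B_lt slack_index by auto
  moreover have "slack (primal l 0 (0\<^sub>v (card B))) dy $ l = 1"
    and "slack (primal l 0 (0\<^sub>v (card B))) dy $ k = 0"
    using slack_index[OF l] slack_index[OF k] Ay_k \<open>c \<noteq> 0\<close> unfolding c_def by simp_all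
  moreover have "M *\<^sub>v dy = 0\<^sub>v m"
    unfolding dy_def using M_carrier y My by (simp add: mult_mat_vec[of _ _ m])
  ultimately have "step_system H A M l k B m (0, 0, 0\<^sub>v (card B), dy, 1, 0)"
    unfolding step_system_iff using y A by (simp add: primal_zero dy_def)
  then show False using step_dzk_nonzero by blast
qed

lemma null_primal_direction_head_k:
  assumes w: "w \<in> carrier_vec (card B)"
    and Hz: "H *\<^sub>v primal k u w = 0\<^sub>v n" and Az: "A *\<^sub>v primal k u w = 0\<^sub>v m"
  shows "u = 0"
proof -
  obtain dxl dxB dy dzl dzk where s: "step_system H A M l k B m (dxl, 0, dxB, dy, dzl, dzk)"
    by (rule obtain_step_solution)
  then have dy: "dy \<in> carrier_vec m" and dxB: "dxB \<in> carrier_vec (card B)"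
    and dzk: "slack (primal l dxl dxB) dy $ k = dzk"
    and slack_B: "\<forall>c<card B. slack (primal l dxl dxB) dy $ (bs ! c) = 0"
    by (simp_all add: step_system_iff ball_B_iff)
  define x where "x = primal l dxl dxB"
  define z where "z = primal k u w"
  have x: "x \<in> carrier_vec n" and z: "z \<in> carrier_vec n" unfolding x_def z_def by simp_all
  have slack: "slack x dy \<in> carrier_vec n" unfolding slack_def using H_carrier A x dy by simp
  have "dzk * u = slack x dy \<bullet> z"
    using scalar_prod_primal[OF k slack w, of u] dzk slack_B unfolding x_def z_def by simp
  also have "\<dots> = (H *\<^sub>v x) \<bullet> z - (transpose_mat A *\<^sub>v dy) \<bullet> z"
    unfolding slack_def using H_carrier A x dy z by (simp add: minus_scalar_prod_distrib[of _ n])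
  also have "\<dots> = x \<bullet> (H *\<^sub>v z) - dy \<bullet> (A *\<^sub>v z)"
    using sym_psd_scalar_prod_swap[OF H x z] transpose_vec_mult_scalar[OF A z dy] by simp
  also have "\<dots> = 0" using Hz Az x dy unfolding z_def by simp
  finally have "dzk * u = 0" .
  moreover have "dzk \<noteq> 0" using step_dzk_nonzero[OF s] .
  ultimately show ?thesis by simp
qed

lemma kkt_mat_carrier:
  "kkt_mat H A M j B m \<in> carrier_mat (1 + card B + m) (1 + card B + m)"
  unfolding kkt_mat_def Let_def length_bs by simp

lemma kkt_mat_kernel:
  assumes jn: "j < n" and v: "v \<in> carrier_vec (1 + card B + m)"
    and Kv: "kkt_mat H A M j B m *\<^sub>v v = 0\<^sub>v (1 + card B + m)"
  obtains u w y where "v = vCons u w @\<^sub>v y" and "w \<in> carrier_vec (card B)" and "y \<in> carrier_vec m"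
    and "H *\<^sub>v primal j u w = 0\<^sub>v n" and "A *\<^sub>v primal j u w = 0\<^sub>v m" and "M *\<^sub>v y = 0\<^sub>v m"
    and "(transpose_mat A *\<^sub>v y) $ j = 0" and "\<forall>i\<in>B. (transpose_mat A *\<^sub>v y) $ i = 0"
proof -
  define P :: "real mat" where "P = selection_mat n (j # bs)"
  have P: "P \<in> carrier_mat n (1 + card B)"
    unfolding P_def using selection_mat_carrier[of n "j # bs"] length_bs by simp
  define u where "u = v $ 0"
  define w where "w = vec (card B) (\<lambda>c. v $ Suc c)"
  define y where "y = vec_last v m"
  have first: "vec_first v (1 + card B) = vCons u w"
    unfolding u_def w_def vec_first_def by (simp add: vec_Suc o_def)
  have w: "w \<in> carrier_vec (card B)" and y: "y \<in> carrier_vec m" unfolding w_def y_def by simp_all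
  have x: "P *\<^sub>v vec_first v (1 + card B) = primal j u w"
    unfolding first primal_def P_def ..
  note ker = kkt_four_block_kernel[OF H M A P v]
  have Kv': "four_block_mat (transpose_mat P * H * P) (transpose_mat P * transpose_mat A)
      (A * P) (- M) *\<^sub>v v = 0\<^sub>v (1 + card B + m)"
    using Kv kkt_mat_eq_four_block_mat[OF H_carrier A M_carrier jn B_lt] unfolding P_def by simp
  have dual: "transpose_mat P *\<^sub>v (transpose_mat A *\<^sub>v y) = 0\<^sub>v (1 + card B)"
    using ker(4)[OF Kv'] unfolding y_def .
  have Ay_carrier: "transpose_mat A *\<^sub>v y \<in> carrier_vec n" using A y by simp
  have Ay: "(transpose_mat A *\<^sub>v y) $ ((j # bs) ! r) = 0" if "r < 1 + card B" for r
    using arg_cong[OF dual, of "\<lambda>z. z $ r"] that A y length_bs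
    unfolding P_def transpose_selection_mat_mult_vec[OF indices_lt[OF jn] Ay_carrier] by simp
  have "\<forall>i\<in>B. (transpose_mat A *\<^sub>v y) $ i = 0"
    unfolding ball_B_iff using Ay[of "Suc _"] by simp
  moreover have "(transpose_mat A *\<^sub>v y) $ j = 0" using Ay[of 0] by simp
  moreover have "v = vCons u w @\<^sub>v y" using v unfolding first[symmetric] y_def by simp
  ultimately show thesis
    using that w y ker(1-3)[OF Kv'] unfolding x y_def by blast
qed

lemma invertible_kkt_mat_l: "invertible_mat (kkt_mat H A M l B m)"
proof (rule invertible_mat_of_trivial_kernel[OF kkt_mat_carrier])
  fix v assume v: "v \<in> carrier_vec (1 + card B + m)"
    and Kv: "kkt_mat H A M l B m *\<^sub>v v = 0\<^sub>v (1 + card B + m)"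
  obtain u w y where v_eq: "v = vCons u w @\<^sub>v y" and w: "w \<in> carrier_vec (card B)"
    and y: "y \<in> carrier_vec m" and Hx: "H *\<^sub>v primal l u w = 0\<^sub>v n"
    and Ax: "A *\<^sub>v primal l u w = 0\<^sub>v m" and My: "M *\<^sub>v y = 0\<^sub>v m"
    and Ay_l: "(transpose_mat A *\<^sub>v y) $ l = 0" and Ay_B: "\<forall>i\<in>B. (transpose_mat A *\<^sub>v y) $ i = 0"
    by (rule kkt_mat_kernel[OF l v Kv])
  have "y = 0\<^sub>v m" using null_dual_direction_eq_0[OF y My Ay_l Ay_B] .
  moreover have "u = 0" using null_primal_direction_head_l[OF w Hx Ax] .
  moreover have "w = 0\<^sub>v (card B)"
    using null_primal_direction_eq_0[OF w] Hx Ax \<open>u = 0\<close> primal_zero_head[OF w] by simp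
  ultimately show "v = 0\<^sub>v (1 + card B + m)" using v_eq vCons_0_append_0 by simp
qed

lemma invertible_kkt_mat_k: "invertible_mat (kkt_mat H A M k B m)"
proof (rule invertible_mat_of_trivial_kernel[OF kkt_mat_carrier])
  fix v assume v: "v \<in> carrier_vec (1 + card B + m)"
    and Kv: "kkt_mat H A M k B m *\<^sub>v v = 0\<^sub>v (1 + card B + m)"
  obtain u w y where v_eq: "v = vCons u w @\<^sub>v y" and w: "w \<in> carrier_vec (card B)"
    and y: "y \<in> carrier_vec m" and Hx: "H *\<^sub>v primal k u w = 0\<^sub>v n"
    and Ax: "A *\<^sub>v primal k u w = 0\<^sub>v m" and My: "M *\<^sub>v y = 0\<^sub>v m"
    and Ay_k: "(transpose_mat A *\<^sub>v y) $ k = 0" and Ay_B: "\<forall>i\<in>B. (transpose_mat A *\<^sub>v y) $ i = 0"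
    by (rule kkt_mat_kernel[OF k v Kv])
  have "y = 0\<^sub>v m"
    using null_dual_direction_eq_0[OF y My null_dual_direction_at_l[OF y My Ay_k Ay_B] Ay_B] .
  moreover have "u = 0" using null_primal_direction_head_k[OF w Hx Ax] .
  moreover have "w = 0\<^sub>v (card B)"
    using null_primal_direction_eq_0[OF w] Hx Ax \<open>u = 0\<close> primal_zero_head[OF w] by simp
  ultimately show "v = 0\<^sub>v (1 + card B + m)" using v_eq vCons_0_append_0 by simp
qed

end

theorem proposition10:
  fixes H M A :: "real mat" and n m l k :: nat and B :: "nat set"
  assumes "sym_psd H n" and "sym_psd M m" and "A \<in> carrier_mat m n"
    and "l < n" and "k < n" and "l \<noteq> k"
    and "B \<subseteq> {0..<n} - {l, k}"
    and "\<exists>!s. step_system H A M l k B m s"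
    and "\<forall>dxl dxk dxB dy dzl dzk.
           step_system H A M l k B m (dxl, dxk, dxB, dy, dzl, dzk) \<longrightarrow> dzk \<noteq> 0"
  shows "invertible_mat (kkt_mat H A M l B m) \<and> invertible_mat (kkt_mat H A M k B m)"
proof -
  interpret kkt_pivot H M A n m l k B
    using assms by unfold_locales blast+
  show ?thesis using invertible_kkt_mat_l invertible_kkt_mat_k ..
qed

end
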